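(* Let $n\ge 3$ and let $(\alpha,\beta)$ satisfy $\beta\ge 0$, $0<\alpha+\beta<n-\beta$ and $\frac{n-\alpha-2\beta}{2n}+\frac{n-\alpha}{2(n-1)}<1$. Then, as $|\xi|\to1^-$ (i.e. for all $\xi\in\mathbb B^n$ with $|\xi|$ sufficiently close to $1$, with a constant depending only on $n,\alpha,\beta$), $$d_{\alpha,\beta}(\xi)\lesssim\begin{cases}(1-|\xi|)^\beta,&\alpha>1,\\ (1-|\xi|)^\beta\log\frac1{1-|\xi|},&\alpha=1,\\ (1-|\xi|)^{\alpha+\beta-1},&\alpha<1.\end{cases}$$
   Context: $d_{\alpha,\beta}(\xi)=\frac{\pi^{n/2}2^{1-\beta}}{\Gamma(n/2)}(1-|\xi|^2)^{\alpha+\beta-1}F\big(\frac{n+\alpha}{2}-1,\frac\alpha2;\frac n2;|\xi|^2\big)$ for $\xi$ in the open unit ball $\mathbb B^n$, where $F$ is the Gauss hypergeometric function; equivalently $d_{\alpha,\beta}(\xi)=\left(\frac{1-|\xi|^2}{2}\right)^\beta\int_{\mathbb S^{n-1}}|\xi-\eta|^{\alpha-n}\mathrm dV(\eta)$. *)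

theory Defs
  imports "HOL-Analysis.Analysis"
begin

definition hyp2F1 :: "real \<Rightarrow> real \<Rightarrow> real \<Rightarrow> real \<Rightarrow> real" where
  "hyp2F1 a b c x =
     (\<Sum>k. pochhammer a k * pochhammer b k / (pochhammer c k * fact k) * x ^ k)"

definition d_ab :: "real \<Rightarrow> real \<Rightarrow> real ^ 'n \<Rightarrow> real" where
  "d_ab \<alpha> \<beta> \<xi> =
     (let n = real CARD('n) in
      pi powr (n / 2) * 2 powr (1 - \<beta>) / Gamma (n / 2)
      * (1 - norm \<xi> ^ 2) powr (\<alpha> + \<beta> - 1)
      * hyp2F1 ((n + \<alpha>) / 2 - 1) (\<alpha> / 2) (n / 2) (norm \<xi> ^ 2))"

end

theory Submission
  imports Defs
begin

(* d_ab(xi) is a positive multiple of (1 - |xi|^2) powr (alpha + beta - 1) F(a, b; c; |xi|^2) with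
   c = n/2 and c - a - b = 1 - alpha.  Writing the Pochhammer symbols through the partial products
   rGamma_series of the reciprocal Gamma function shows that the k-th Gauss coefficient is k powr (alpha - 2)
   times a bounded factor.  Comparing coefficientwise with the binomial series of (1 - x) powr (1 - alpha),
   with the series of -ln (1 - x), or with an absolutely convergent series gives
   F(a, b; c; x) = O((1 - x) powr (1 - alpha)), O(ln (1 / (1 - x))) or O(1) as x -> 1, according as
   alpha > 1, alpha = 1 or alpha < 1.  Finally 1 - |xi|^2 is comparable to 1 - |xi|. *)

section \<open>Coefficients of the Gauss series\<close>

definition hyp2F1_coeff :: "real \<Rightarrow> real \<Rightarrow> real \<Rightarrow> nat \<Rightarrow> real" where
  "hyp2F1_coeff a b c k = pochhammer a k * pochhammer b k / (pochhammer c k * fact k)"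

lemma hyp2F1_eq_suminf_coeff: "hyp2F1 a b c x = (\<Sum>k. hyp2F1_coeff a b c k * x ^ k)"
  by (simp add: hyp2F1_def hyp2F1_coeff_def)

lemma hyp2F1_coeff_0 [simp]: "hyp2F1_coeff a b c 0 = 1"
  by (simp add: hyp2F1_coeff_def)

lemma pochhammer_Suc_eq_rGamma_series:
  fixes z :: real
  shows "pochhammer z (Suc m) = rGamma_series z m * fact m * exp (z * ln (real m))"
  by (simp add: rGamma_series_def)

lemma rGamma_series_nonzero:
  fixes z :: real
  assumes "z \<notin> \<int>\<^sub>\<le>\<^sub>0"
  shows "rGamma_series z m \<noteq> 0"
  using assms pochhammer_eq_0_imp_nonpos_Int[of z "Suc m"] by (auto simp: rGamma_series_def)

lemma hyp2F1_coeff_Suc: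
  assumes "c \<notin> \<int>\<^sub>\<le>\<^sub>0"
  shows "hyp2F1_coeff a b c (Suc m) =
    rGamma_series a m * rGamma_series b m / rGamma_series c m
      * (exp ((a + b - c) * ln (real m)) / (real m + 1))"
proof -
  have "fact m \<noteq> (0::real)" "rGamma_series c m \<noteq> 0"
    using rGamma_series_nonzero[OF assms] by simp_all
  moreover have "exp ((a + b - c) * ln (real m)) =
      exp (a * ln (real m)) * exp (b * ln (real m)) / exp (c * ln (real m))"
    by (simp add: algebra_simps exp_add exp_diff)
  ultimately show ?thesis
    by (simp add: hyp2F1_coeff_def pochhammer_Suc_eq_rGamma_series
        divide_simps) (simp add: algebra_simps)
qed

lemma pochhammer_div_fact_Suc:
  fixes s :: real
  shows "pochhammer s (Suc m) / fact (Suc m) =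
    rGamma_series s m * (exp (s * ln (real m)) / (real m + 1))"
  by (simp add: pochhammer_Suc_eq_rGamma_series)

text \<open>The factor \<^term>\<open>exp (s * ln (real m))\<close> is \<^term>\<open>real m powr s\<close> for \<open>m > 0\<close> but equals 1
  at \<open>m = 0\<close> (as \<open>ln 0 = 0\<close>), where \<open>powr\<close> would give 0 and make the bound false.\<close>

lemma hyp2F1_coeff_Suc_bound:
  assumes "c \<notin> \<int>\<^sub>\<le>\<^sub>0"
  obtains Q where "Q > 0"
    "\<And>m. \<bar>hyp2F1_coeff a b c (Suc m)\<bar> \<le> Q * (exp ((a + b - c) * ln (real m)) / (real m + 1))"
proof -
  define q where "q m = rGamma_series a m * rGamma_series b m / rGamma_series c m" for m
  have "q \<longlonglongrightarrow> rGamma a * rGamma b / rGamma c"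
    unfolding q_def using assms by (intro tendsto_intros rGamma_nonzero)
  then obtain Q where Q: "Q > 0" "\<And>m. \<bar>q m\<bar> \<le> Q"
    using BseqE[OF convergent_imp_Bseq[OF convergentI]] by (metis real_norm_def)
  have "\<bar>hyp2F1_coeff a b c (Suc m)\<bar> = \<bar>q m\<bar> * (exp ((a + b - c) * ln (real m)) / (real m + 1))"
    for m by (simp add: hyp2F1_coeff_Suc[OF assms] q_def abs_mult)
  with Q show ?thesis
    by (intro that[of Q]) (auto intro!: divide_right_mono mult_right_mono)
qed

lemma hyp2F1_coeff_le_binomial_coeff:
  assumes "c \<notin> \<int>\<^sub>\<le>\<^sub>0" and "c < a + b"
  obtains Q where "Q > 0"
    "\<And>k. \<bar>hyp2F1_coeff a b c k\<bar> \<le> Q * (pochhammer (a + b - c) k / fact k)"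
proof -
  define s where "s = a + b - c"
  define q where
    "q m = rGamma_series a m * rGamma_series b m / rGamma_series c m / rGamma_series s m" for m
  have s_pos: "rGamma_series s m > 0" for m
    using assms(2) by (simp add: rGamma_series_def s_def pochhammer_pos)
  have "q \<longlonglongrightarrow> rGamma a * rGamma b / rGamma c / rGamma s"
    unfolding q_def using assms by (intro tendsto_intros rGamma_nonzero) (auto simp: s_def)
  then obtain Q where Q: "\<And>m. \<bar>q m\<bar> \<le> Q"
    using BseqE[OF convergent_imp_Bseq[OF convergentI]] by (metis real_norm_def)
  define u where "u k = pochhammer s k / fact k" for k
  have u_nonneg: "u k \<ge> 0" for k
    using assms(2) by (simp add: u_def s_def pochhammer_pos less_imp_le)
  have t_Suc: "hyp2F1_coeff a b c (Suc m) = q m * u (Suc m)" for m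
    unfolding u_def pochhammer_div_fact_Suc hyp2F1_coeff_Suc[OF assms(1)]
    using s_pos[of m] by (simp add: q_def s_def)
  have "\<bar>hyp2F1_coeff a b c k\<bar> \<le> max 1 Q * u k" for k
  proof (cases k)
    case 0
    then show ?thesis by (simp add: u_def)
  next
    case (Suc m)
    have "\<bar>q m\<bar> * u k \<le> max 1 Q * u k"
      using Q[of m] u_nonneg[of k] by (intro mult_right_mono) auto
    then show ?thesis
      using Suc u_nonneg by (simp add: t_Suc abs_mult)
  qed
  then show ?thesis
    by (intro that[of "max 1 Q"]) (auto simp: s_def u_def)
qed

section \<open>Growth of the hypergeometric function at 1\<close>

lemma sums_pochhammer_div_fact_powr:
  fixes s x :: real
  assumes "\<bar>x\<bar> < 1"
  shows "(\<lambda>k. pochhammer s k / fact k * x ^ k) sums (1 - x) powr (- s)"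
proof -
  have "(\<lambda>k. ((- s) gchoose k) * (- x) ^ k) sums (1 + - x) powr (- s)"
    using assms by (intro gen_binomial_real) simp
  moreover have "((- s) gchoose k) * (- x) ^ k = pochhammer s k / fact k * x ^ k" for k
  proof -
    have "(-1::real) ^ k * (-1) ^ k = 1"
      by (simp flip: power_mult_distrib)
    then show ?thesis
      by (simp add: gbinomial_pochhammer power_minus[of x] mult_ac)
  qed
  ultimately show ?thesis
    by simp
qed

lemma sums_power_div_of_nat_ln:
  fixes x :: real
  assumes "\<bar>x\<bar> < 1"
  shows "(\<lambda>k. x ^ k / real k) sums (- ln (1 - x))"
proof -
  have "(\<lambda>k. - ((- (- x)) ^ k) / real k) sums ln (1 + - x)"
    using assms by (intro ln_series') simp
  from sums_minus[OF this] show ?thesis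
    by simp
qed

lemma abs_suminf_le_sums:
  fixes f g :: "nat \<Rightarrow> real"
  assumes "\<And>k. \<bar>f k\<bar> \<le> g k" and "g sums G"
  shows "\<bar>suminf f\<bar> \<le> G"
  using norm_suminf_le[of f g] assms by (simp add: sums_iff)

lemma abs_hyp2F1_le_powr:
  assumes "c \<notin> \<int>\<^sub>\<le>\<^sub>0" and "c < a + b"
  obtains M where "M > 0"
    "\<And>x. 0 \<le> x \<Longrightarrow> x < 1 \<Longrightarrow> \<bar>hyp2F1 a b c x\<bar> \<le> M * (1 - x) powr (c - a - b)"
proof -
  obtain Q where Q: "Q > 0"
    "\<And>k. \<bar>hyp2F1_coeff a b c k\<bar> \<le> Q * (pochhammer (a + b - c) k / fact k)"
    using hyp2F1_coeff_le_binomial_coeff[OF assms] by blast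
  have "\<bar>hyp2F1 a b c x\<bar> \<le> Q * (1 - x) powr (c - a - b)" if x: "0 \<le> x" "x < 1" for x
  proof -
    define g where "g k = Q * (pochhammer (a + b - c) k / fact k * x ^ k)" for k
    have "g sums (Q * (1 - x) powr (- (a + b - c)))"
      unfolding g_def using x by (intro sums_mult sums_pochhammer_div_fact_powr) simp
    then have "g sums (Q * (1 - x) powr (c - a - b))"
      by (simp only: minus_diff_eq diff_diff_eq)
    moreover have "\<bar>hyp2F1_coeff a b c k * x ^ k\<bar> \<le> g k" for k
      unfolding g_def
      using mult_right_mono[OF Q(2)[of k], of "x ^ k"] x by (simp add: abs_mult mult_ac)
    ultimately show ?thesis
      unfolding hyp2F1_eq_suminf_coeff by (rule abs_suminf_le_sums[rotated])
  qed
  with Q(1) show ?thesis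
    by (rule that)
qed

lemma abs_hyp2F1_le_ln:
  assumes "c \<notin> \<int>\<^sub>\<le>\<^sub>0" and "a + b = c"
  obtains M where "M > 0"
    "\<And>x. 0 \<le> x \<Longrightarrow> x < 1 \<Longrightarrow> \<bar>hyp2F1 a b c x\<bar> \<le> M * (1 - ln (1 - x))"
proof -
  obtain Q where Q: "Q > 0"
    "\<And>m. \<bar>hyp2F1_coeff a b c (Suc m)\<bar> \<le> Q * (exp ((a + b - c) * ln (real m)) / (real m + 1))"
    using hyp2F1_coeff_Suc_bound[OF assms(1), where a = a and b = b] by blast
  define g where "g k = (if k = 0 then 1 else Q / real k)" for k
  have coeff_le: "\<bar>hyp2F1_coeff a b c k\<bar> \<le> g k" for k
    using Q(2) assms(2) by (cases k) (auto simp: g_def add.commute)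
  have "\<bar>hyp2F1 a b c x\<bar> \<le> (1 + Q) * (1 - ln (1 - x))" if x: "0 \<le> x" "x < 1" for x
  proof -
    have "(\<lambda>k. g k * x ^ k) = (\<lambda>k. (if k = 0 then 1 else 0) + Q * (x ^ k / real k))"
      by (auto simp: g_def)
    then have "(\<lambda>k. g k * x ^ k) sums (1 + Q * - ln (1 - x))"
      using x by (simp only:) (intro sums_add sums_single sums_mult sums_power_div_of_nat_ln, simp)
    moreover have "\<bar>hyp2F1_coeff a b c k * x ^ k\<bar> \<le> g k * x ^ k" for k
      using mult_right_mono[OF coeff_le[of k], of "x ^ k"] x by (simp add: abs_mult)
    ultimately have "\<bar>hyp2F1 a b c x\<bar> \<le> 1 + Q * - ln (1 - x)"
      unfolding hyp2F1_eq_suminf_coeff by (rule abs_suminf_le_sums[rotated])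
    also have "\<dots> \<le> (1 + Q) * (1 - ln (1 - x))"
    proof -
      have "ln (1 - x) \<le> 0"
        using x by simp
      with Q(1) show ?thesis
        by (simp add: algebra_simps)
    qed
    finally show ?thesis .
  qed
  moreover have "1 + Q > 0"
    using Q(1) by simp
  ultimately show ?thesis
    using that by blast
qed

lemma summable_abs_hyp2F1_coeff:
  assumes "c \<notin> \<int>\<^sub>\<le>\<^sub>0" and "a + b < c"
  shows "summable (\<lambda>k. \<bar>hyp2F1_coeff a b c k\<bar>)"
proof -
  define h where "h m = exp ((a + b - c) * ln (real m)) / (real m + 1)" for m
  obtain Q where "Q > 0" and Q: "\<And>m. \<bar>hyp2F1_coeff a b c (Suc m)\<bar> \<le> Q * h m"
    using hyp2F1_coeff_Suc_bound[where a = a and b = b, OF assms(1)] unfolding h_def by blast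
  define w where "w m = (if m = 0 then 1 else 0) + real m powr (a + b - c - 1)" for m
  have h_nonneg: "h m \<ge> 0" for m
    by (simp add: h_def)
  have h_le: "h m \<le> w m" for m
  proof (cases "m = 0")
    case False
    then have "h m = real m powr (a + b - c) / (real m + 1)"
      by (simp add: h_def powr_def)
    also have "\<dots> \<le> real m powr (a + b - c) / real m"
      using False by (intro divide_left_mono) auto
    also have "\<dots> = w m"
      using False by (simp add: w_def powr_diff)
    finally show ?thesis .
  qed (simp add: h_def w_def)
  have "summable w"
    unfolding w_def using assms(2)
    by (intro summable_add summable_single) (simp add: summable_real_powr_iff)
  then have "summable h"
    by (rule summable_comparison_test') (use h_le h_nonneg in simp)
  then have "summable (\<lambda>m. Q * h m)"
    by (rule summable_mult)
  then have "summable (\<lambda>m. \<bar>hyp2F1_coeff a b c (Suc m)\<bar>)"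
    by (rule summable_comparison_test') (use Q in simp)
  then show ?thesis
    by (subst (asm) summable_Suc_iff)
qed

lemma abs_hyp2F1_le_const:
  assumes "c \<notin> \<int>\<^sub>\<le>\<^sub>0" and "a + b < c"
  obtains M where "M > 0" "\<And>x. \<bar>x\<bar> \<le> 1 \<Longrightarrow> \<bar>hyp2F1 a b c x\<bar> \<le> M"
proof -
  define S where "S = (\<Sum>k. \<bar>hyp2F1_coeff a b c k\<bar>)"
  have summable: "summable (\<lambda>k. \<bar>hyp2F1_coeff a b c k\<bar>)"
    using summable_abs_hyp2F1_coeff[OF assms] .
  have "S \<ge> 0"
    unfolding S_def by (intro suminf_nonneg summable) simp
  moreover have "\<bar>hyp2F1 a b c x\<bar> \<le> S + 1" if "\<bar>x\<bar> \<le> 1" for x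
  proof -
    have "\<bar>hyp2F1_coeff a b c k * x ^ k\<bar> \<le> \<bar>hyp2F1_coeff a b c k\<bar>" for k
      using that by (simp add: abs_mult power_abs mult_left_le power_le_one)
    then have "\<bar>hyp2F1 a b c x\<bar> \<le> S"
      unfolding hyp2F1_eq_suminf_coeff S_def using summable_sums[OF summable]
      by (rule abs_suminf_le_sums)
    then show ?thesis
      by linarith
  qed
  ultimately show ?thesis
    by (intro that[of "S + 1"]) auto
qed

section \<open>Boundary behaviour of d_ab\<close>

lemma one_minus_square_powr_le:
  fixes r e :: real
  assumes "0 \<le> r" "r < 1"
  shows "(1 - r\<^sup>2) powr e \<le> 2 powr \<bar>e\<bar> * (1 - r) powr e"
proof -
  have "(1 + r) powr e \<le> 2 powr \<bar>e\<bar>"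
  proof (cases "e \<ge> 0")
    case True
    then show ?thesis
      using assms by (simp add: powr_mono2)
  next
    case False
    then have "(1 + r) powr e \<le> (1 + r) powr 0"
      using assms by (intro powr_mono) auto
    also have "\<dots> \<le> 2 powr \<bar>e\<bar>"
      using assms by (simp add: ge_one_powr_ge_zero)
    finally show ?thesis .
  qed
  moreover have "1 - r\<^sup>2 = (1 + r) * (1 - r)"
    by (simp add: power2_eq_square algebra_simps)
  ultimately show ?thesis
    using assms by (simp add: powr_mult mult_right_mono)
qed

lemma one_minus_ln_one_minus_square_le:
  fixes r :: real
  assumes "1 - exp (-1) < r" "r < 1"
  shows "1 - ln (1 - r\<^sup>2) \<le> 2 * ln (1 / (1 - r))"
proof -
  have "exp (-1) < (1::real)"
    by simp
  then have "0 \<le> r"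
    using assms(1) by linarith
  then have r_sq: "r\<^sup>2 \<le> r"
    using assms(2) by (simp add: power2_eq_square mult_left_le)
  have "ln (1 - r) < ln (exp (-1))"
    using assms by (subst ln_less_cancel_iff) auto
  moreover have "ln (1 - r) \<le> ln (1 - r\<^sup>2)"
    using assms r_sq by (subst ln_le_cancel_iff) auto
  moreover have "ln (1 / (1 - r)) = - ln (1 - r)"
    using assms by (simp add: ln_div)
  ultimately show ?thesis
    by simp
qed

lemma d_ab_hyp2F1_form:
  fixes \<alpha> \<beta> :: real
  obtains P a b c where "P > 0" "a + b - c = \<alpha> - 1" "c \<notin> \<int>\<^sub>\<le>\<^sub>0"
    "\<And>\<xi> :: real ^ 'n. d_ab \<alpha> \<beta> \<xi> = P * (1 - norm \<xi> ^ 2) powr (\<alpha> + \<beta> - 1) * hyp2F1 a b c (norm \<xi> ^ 2)"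
proof -
  define n where "n = real CARD('n)"
  have "n / 2 > 0"
    by (simp add: n_def)
  then show ?thesis
    by (intro that[of "pi powr (n / 2) * 2 powr (1 - \<beta>) / Gamma (n / 2)"
          "(n + \<alpha>) / 2 - 1" "\<alpha> / 2" "n / 2"])
      (auto simp: d_ab_def n_def Let_def field_simps)
qed

lemma d_ab_bound_alpha_gt_1:
  assumes "\<alpha> > 1"
  obtains C where "C > 0"
    "\<And>\<xi> :: real ^ 'n. norm \<xi> < 1 \<Longrightarrow> d_ab \<alpha> \<beta> \<xi> \<le> C * (1 - norm \<xi>) powr \<beta>"
proof -
  obtain P a b c where P: "P > 0" and abc: "a + b - c = \<alpha> - 1" and c: "c \<notin> \<int>\<^sub>\<le>\<^sub>0"
    and d: "\<And>\<xi> :: real ^ 'n. d_ab \<alpha> \<beta> \<xi> = P * (1 - norm \<xi> ^ 2) powr (\<alpha> + \<beta> - 1) * hyp2F1 a b c (norm \<xi> ^ 2)"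
    using d_ab_hyp2F1_form[where \<alpha> = \<alpha> and \<beta> = \<beta>] by blast
  obtain M where M: "M > 0" "\<And>x. 0 \<le> x \<Longrightarrow> x < 1 \<Longrightarrow> \<bar>hyp2F1 a b c x\<bar> \<le> M * (1 - x) powr (c - a - b)"
    using abs_hyp2F1_le_powr[OF c, of a b] abc assms by auto
  have "d_ab \<alpha> \<beta> \<xi> \<le> P * M * 2 powr \<bar>\<beta>\<bar> * (1 - norm \<xi>) powr \<beta>" if "norm \<xi> < 1" for \<xi> :: "real ^ 'n"
  proof -
    define x where "x = norm \<xi> ^ 2"
    have x: "0 \<le> x" "x < 1"
      using that by (auto simp: x_def power_less_one_iff)
    have "c - a - b = 1 - \<alpha>"
      using abc by simp
    then have "hyp2F1 a b c x \<le> M * (1 - x) powr (1 - \<alpha>)"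
      using M(2)[OF x] by simp
    then have "d_ab \<alpha> \<beta> \<xi> \<le> P * (1 - x) powr (\<alpha> + \<beta> - 1) * (M * (1 - x) powr (1 - \<alpha>))"
      unfolding d x_def[symmetric] using P by (intro mult_left_mono) auto
    also have "\<dots> = P * M * (1 - x) powr \<beta>"
      by (simp add: powr_add[symmetric] mult_ac)
    also have "\<dots> \<le> P * M * (2 powr \<bar>\<beta>\<bar> * (1 - norm \<xi>) powr \<beta>)"
      unfolding x_def using P M(1) that by (intro mult_left_mono one_minus_square_powr_le) auto
    finally show ?thesis
      by (simp add: mult_ac)
  qed
  with P M(1) show ?thesis
    by (intro that[of "P * M * 2 powr \<bar>\<beta>\<bar>"]) auto
qed

lemma d_ab_bound_alpha_eq_1:
  obtains C where "C > 0"
    "\<And>\<xi> :: real ^ 'n. 1 - exp (-1) < norm \<xi> \<Longrightarrow> norm \<xi> < 1 \<Longrightarrow>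
       d_ab 1 \<beta> \<xi> \<le> C * ((1 - norm \<xi>) powr \<beta> * ln (1 / (1 - norm \<xi>)))"
proof -
  obtain P a b c where P: "P > 0" and abc: "a + b - c = 1 - 1" and c: "c \<notin> \<int>\<^sub>\<le>\<^sub>0"
    and d: "\<And>\<xi> :: real ^ 'n. d_ab 1 \<beta> \<xi> = P * (1 - norm \<xi> ^ 2) powr (1 + \<beta> - 1) * hyp2F1 a b c (norm \<xi> ^ 2)"
    using d_ab_hyp2F1_form[where \<alpha> = 1 and \<beta> = \<beta>] by blast
  obtain M where M: "M > 0" "\<And>x. 0 \<le> x \<Longrightarrow> x < 1 \<Longrightarrow> \<bar>hyp2F1 a b c x\<bar> \<le> M * (1 - ln (1 - x))"
    using abs_hyp2F1_le_ln[OF c] abc by auto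
  have "d_ab 1 \<beta> \<xi> \<le> 2 * P * M * 2 powr \<bar>\<beta>\<bar> * ((1 - norm \<xi>) powr \<beta> * ln (1 / (1 - norm \<xi>)))"
    if r: "1 - exp (-1) < norm \<xi>" "norm \<xi> < 1" for \<xi> :: "real ^ 'n"
  proof -
    define x where "x = norm \<xi> ^ 2"
    have x: "0 \<le> x" "x < 1"
      using r by (auto simp: x_def power_less_one_iff)
    have "ln (1 - x) \<le> 0"
      using x by simp
    have powr_le: "(1 - x) powr \<beta> \<le> 2 powr \<bar>\<beta>\<bar> * (1 - norm \<xi>) powr \<beta>"
      unfolding x_def using r by (intro one_minus_square_powr_le) auto
    have ln_le: "1 - ln (1 - x) \<le> 2 * ln (1 / (1 - norm \<xi>))"
      unfolding x_def using r by (rule one_minus_ln_one_minus_square_le)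
    have "d_ab 1 \<beta> \<xi> \<le> P * (1 - x) powr \<beta> * (M * (1 - ln (1 - x)))"
      unfolding d x_def[symmetric] add_diff_cancel_left' using P abs_le_D1[OF M(2)[OF x]]
      by (intro mult_left_mono) auto
    also have "\<dots> \<le> P * (2 powr \<bar>\<beta>\<bar> * (1 - norm \<xi>) powr \<beta>) * (M * (2 * ln (1 / (1 - norm \<xi>))))"
      using P M(1) powr_le ln_le \<open>ln (1 - x) \<le> 0\<close> by (intro mult_mono mult_left_mono) auto
    finally show ?thesis
      by (simp add: mult_ac)
  qed
  with P M(1) show ?thesis
    by (intro that[of "2 * P * M * 2 powr \<bar>\<beta>\<bar>"]) auto
qed

lemma d_ab_bound_alpha_lt_1:
  assumes "\<alpha> < 1"
  obtains C where "C > 0"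
    "\<And>\<xi> :: real ^ 'n. norm \<xi> < 1 \<Longrightarrow> d_ab \<alpha> \<beta> \<xi> \<le> C * (1 - norm \<xi>) powr (\<alpha> + \<beta> - 1)"
proof -
  obtain P a b c where P: "P > 0" and abc: "a + b - c = \<alpha> - 1" and c: "c \<notin> \<int>\<^sub>\<le>\<^sub>0"
    and d: "\<And>\<xi> :: real ^ 'n. d_ab \<alpha> \<beta> \<xi> = P * (1 - norm \<xi> ^ 2) powr (\<alpha> + \<beta> - 1) * hyp2F1 a b c (norm \<xi> ^ 2)"
    using d_ab_hyp2F1_form[where \<alpha> = \<alpha> and \<beta> = \<beta>] by blast
  obtain M where M: "M > 0" "\<And>x. \<bar>x\<bar> \<le> 1 \<Longrightarrow> \<bar>hyp2F1 a b c x\<bar> \<le> M"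
    using abs_hyp2F1_le_const[OF c, of a b] abc assms by auto
  have "d_ab \<alpha> \<beta> \<xi> \<le> P * M * 2 powr \<bar>\<alpha> + \<beta> - 1\<bar> * (1 - norm \<xi>) powr (\<alpha> + \<beta> - 1)"
    if "norm \<xi> < 1" for \<xi> :: "real ^ 'n"
  proof -
    have "hyp2F1 a b c (norm \<xi> ^ 2) \<le> M"
      using that by (intro abs_le_D1[OF M(2)]) (simp add: power_le_one)
    then have "d_ab \<alpha> \<beta> \<xi> \<le> P * (1 - norm \<xi> ^ 2) powr (\<alpha> + \<beta> - 1) * M"
      unfolding d using P by (intro mult_left_mono) auto
    also have "\<dots> \<le> P * (2 powr \<bar>\<alpha> + \<beta> - 1\<bar> * (1 - norm \<xi>) powr (\<alpha> + \<beta> - 1)) * M"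
      using P M(1) that by (intro mult_right_mono mult_left_mono one_minus_square_powr_le) auto
    finally show ?thesis
      by (simp add: mult_ac)
  qed
  with P M(1) show ?thesis
    by (intro that[of "P * M * 2 powr \<bar>\<alpha> + \<beta> - 1\<bar>"]) auto
qed

theorem lemma2p7:
  fixes \<alpha> \<beta> :: real
  assumes n3: "CARD('n) \<ge> 3"
    and b0: "\<beta> \<ge> 0"
    and ab1: "0 < \<alpha> + \<beta>"
    and ab2: "\<alpha> + \<beta> < real CARD('n) - \<beta>"
    and ab3: "(real CARD('n) - \<alpha> - 2 * \<beta>) / (2 * real CARD('n))
              + (real CARD('n) - \<alpha>) / (2 * (real CARD('n) - 1)) < 1"
  shows "\<exists>C > 0. \<exists>\<delta> > 0. \<forall>\<xi> :: real ^ 'n.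
           1 - \<delta> < norm \<xi> \<and> norm \<xi> < 1 \<longrightarrow>
           d_ab \<alpha> \<beta> \<xi> \<le> C *
             (if \<alpha> > 1 then (1 - norm \<xi>) powr \<beta>
              else if \<alpha> = 1 then (1 - norm \<xi>) powr \<beta> * ln (1 / (1 - norm \<xi>))
              else (1 - norm \<xi>) powr (\<alpha> + \<beta> - 1))"
proof -
  consider "\<alpha> > 1" | "\<alpha> = 1" | "\<alpha> < 1"
    by linarith
  then show ?thesis
  proof cases
    case 1
    then obtain C where "C > 0" "\<And>\<xi> :: real ^ 'n. norm \<xi> < 1 \<Longrightarrow> d_ab \<alpha> \<beta> \<xi> \<le> C * (1 - norm \<xi>) powr \<beta>"
      using d_ab_bound_alpha_gt_1[where \<beta> = \<beta>] by blast
    with 1 show ?thesis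
      by (intro exI[of _ C] conjI exI[of _ 1]) auto
  next
    case 2
    obtain C where "C > 0" "\<And>\<xi> :: real ^ 'n. 1 - exp (-1) < norm \<xi> \<Longrightarrow> norm \<xi> < 1 \<Longrightarrow>
        d_ab 1 \<beta> \<xi> \<le> C * ((1 - norm \<xi>) powr \<beta> * ln (1 / (1 - norm \<xi>)))"
      using d_ab_bound_alpha_eq_1[where \<beta> = \<beta>] by blast
    with 2 show ?thesis
      by (intro exI[of _ C] conjI exI[of _ "exp (-1)"]) auto
  next
    case 3
    then obtain C where "C > 0"
      "\<And>\<xi> :: real ^ 'n. norm \<xi> < 1 \<Longrightarrow> d_ab \<alpha> \<beta> \<xi> \<le> C * (1 - norm \<xi>) powr (\<alpha> + \<beta> - 1)"
      using d_ab_bound_alpha_lt_1[where \<beta> = \<beta>] by blast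
    with 3 show ?thesis
      by (intro exI[of _ C] conjI exI[of _ 1]) auto
  qed
qed

end
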